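(* Let $\mathcal H$ be a real Hilbert space, $T:\mathcal H\rightrightarrows\mathcal H$ maximal monotone, and $D:\mathcal H\to\mathcal H$ monotone and continuously differentiable with Lipschitz continuous derivative $D'$. For $u\in\mathcal H$ let $D_{(u)}(x):=D(u)+D'(u)(x-u)$. Let $(s^k)$ and $(u^k)$ be bounded sequences in $\mathcal H$ and $(\rho^k)$ a bounded sequence in $(0,\infty)$. Then the sequence $x^k:=J_{\rho^k(T+D_{(u^k)})}(s^k)$, $k\ge0$, is bounded.
   Context: For a maximal monotone operator $S$, $J_S:=(S+I)^{-1}$ denotes its resolvent. *)

theory Defs
  imports "HOL-Analysis.Analysis"
begin

text \<open>Set-valued operators on a real inner product space are modelled as functions
  'a \<Rightarrow> 'a set (x \<mapsto> T(x)).\<close>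

definition monotone_op :: "('a::real_inner \<Rightarrow> 'a set) \<Rightarrow> bool" where
  "monotone_op T \<longleftrightarrow>
     (\<forall>x y v w. v \<in> T x \<longrightarrow> w \<in> T y \<longrightarrow> inner (x - y) (v - w) \<ge> 0)"

definition maximal_monotone :: "('a::real_inner \<Rightarrow> 'a set) \<Rightarrow> bool" where
  "maximal_monotone T \<longleftrightarrow>
     monotone_op T \<and> (\<forall>S. monotone_op S \<and> (\<forall>x. T x \<subseteq> S x) \<longrightarrow> S = T)"

definition op_plus :: "('a::real_vector \<Rightarrow> 'a set) \<Rightarrow> ('a \<Rightarrow> 'a) \<Rightarrow> 'a \<Rightarrow> 'a set" where
  "op_plus T F = (\<lambda>x. (\<lambda>v. v + F x) ` T x)"

definition op_scale :: "real \<Rightarrow> ('a::real_vector \<Rightarrow> 'a set) \<Rightarrow> 'a \<Rightarrow> 'a set" where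
  "op_scale \<rho> S = (\<lambda>x. (\<lambda>v. \<rho> *\<^sub>R v) ` S x)"

text \<open>Resolvent J_S = (S + I)^{-1}, as a set-valued map: x \<in> J_S(s) iff s \<in> S(x) + x.\<close>
definition resolvent :: "('a::real_vector \<Rightarrow> 'a set) \<Rightarrow> 'a \<Rightarrow> 'a set" where
  "resolvent S s = {x. s \<in> (\<lambda>v. v + x) ` S x}"

definition linearization :: "('a::real_normed_vector \<Rightarrow> 'a) \<Rightarrow> ('a \<Rightarrow> ('a \<Rightarrow>\<^sub>L 'a)) \<Rightarrow> 'a \<Rightarrow> 'a \<Rightarrow> 'a" where
  "linearization D D' u = (\<lambda>x. D u + blinfun_apply (D' u) (x - u))"

end

theory Submission
  imports Defs
begin

text \<open>Pick t0 \<in> T x0. Since T + D_(u) is monotone (D'(u) is positive semidefinite as the derivative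
  of a monotone map), the resolvent of \<rho>(T + D_(u)) is nonexpansive, and it maps
  x0 + \<rho>(t0 + D_(u)(x0)) to x0. Hence |x - x0| \<le> |s - x0 - \<rho>(t0 + D_(u)(x0))|, and the right-hand
  side is bounded uniformly in k because D and D' are bounded on bounded sets.\<close>

lemma resolvent_iff: "x \<in> resolvent S s \<longleftrightarrow> s - x \<in> S x"
  by (force simp: resolvent_def)

lemma resolvent_nonexpansive:
  fixes S :: "'a::real_inner \<Rightarrow> 'a set"
  assumes "monotone_op S" "x \<in> resolvent S s" "y \<in> resolvent S r"
  shows "dist x y \<le> dist s r"
proof -
  have "0 \<le> inner (x - y) ((s - x) - (r - y))"
    using assms unfolding resolvent_iff monotone_op_def by blast
  also have "(s - x) - (r - y) = (s - r) - (x - y)"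
    by (simp add: algebra_simps)
  also have "inner (x - y) ((s - r) - (x - y)) = inner (x - y) (s - r) - norm (x - y) * norm (x - y)"
    by (simp only: inner_diff_right dot_square_norm power2_eq_square)
  finally have "norm (x - y) * norm (x - y) \<le> inner (x - y) (s - r)"
    by simp
  also have "\<dots> \<le> norm (x - y) * norm (s - r)"
    by (rule norm_cauchy_schwarz)
  finally have "norm (x - y) * norm (x - y) \<le> norm (x - y) * norm (s - r)" .
  then show ?thesis
    unfolding dist_norm by (cases "x = y") (auto dest: mult_left_le_imp_le)
qed

lemma monotone_op_plus:
  assumes "monotone_op T" "monotone_op (\<lambda>y. {F y})"
  shows "monotone_op (op_plus T F)"
  unfolding monotone_op_def op_plus_def
proof (clarsimp)
  fix x y v w
  assume "v \<in> T x" "w \<in> T y"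
  then have "0 \<le> inner (x - y) (v - w)" "0 \<le> inner (x - y) (F x - F y)"
    using assms unfolding monotone_op_def by blast+
  then have "0 \<le> inner (x - y) ((v - w) + (F x - F y))"
    by (simp only: inner_add_right add_nonneg_nonneg)
  also have "(v - w) + (F x - F y) = v + F x - (w + F y)"
    by (simp add: algebra_simps)
  finally show "0 \<le> inner (x - y) (v + F x - (w + F y))" .
qed

lemma monotone_op_scale:
  assumes "\<rho> \<ge> 0" "monotone_op S"
  shows "monotone_op (op_scale \<rho> S)"
  using assms unfolding monotone_op_def op_scale_def
  by (auto simp: scaleR_diff_right[symmetric])

lemma maximal_monotone_domain_nonempty:
  assumes "maximal_monotone T"
  obtains x v where "v \<in> T x"
proof (rule ccontr)
  assume "\<not> thesis"
  with that have empty: "T = (\<lambda>_. {})" by blast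
  have "monotone_op (\<lambda>_::'a. {0::'a})" by (simp add: monotone_op_def)
  with assms empty have "(\<lambda>_::'a. {0::'a}) = T" unfolding maximal_monotone_def by blast
  with empty show False by (metis empty_not_insert)
qed

text \<open>Monotonicity gives t (D(u + t h) - D u) \<bullet> h \<ge> 0, so the derivative of t \<mapsto> h \<bullet> D(u + t h) at 0
  cannot be negative.\<close>
lemma monotone_derivative_nonneg:
  fixes D :: "'a::real_inner \<Rightarrow> 'a"
  assumes mono: "monotone_op (\<lambda>y. {D y})"
    and der: "(D has_derivative blinfun_apply A) (at u)"
  shows "inner h (blinfun_apply A h) \<ge> 0"
proof (rule ccontr)
  assume neg: "\<not> ?thesis"
  define f where "f t = inner h (D (u + t *\<^sub>R h))" for t :: real
  have line: "((\<lambda>t::real. u + t *\<^sub>R h) has_derivative (\<lambda>t. t *\<^sub>R h)) (at 0)"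
    by (auto intro!: derivative_eq_intros)
  have "((\<lambda>t::real. D (u + t *\<^sub>R h)) has_derivative (\<lambda>t. blinfun_apply A (t *\<^sub>R h))) (at 0)"
    using has_derivative_compose[OF line] der by (simp add: o_def)
  hence "(f has_derivative (\<lambda>t. inner h (blinfun_apply A (t *\<^sub>R h)))) (at 0)"
    unfolding f_def by (rule has_derivative_inner_right)
  also have "(\<lambda>t. inner h (blinfun_apply A (t *\<^sub>R h))) = (*) (inner h (blinfun_apply A h))"
    by (simp add: blinfun.scaleR_right fun_eq_iff)
  finally have "DERIV f 0 :> inner h (blinfun_apply A h)"
    unfolding has_field_derivative_def .
  moreover have "inner h (blinfun_apply A h) < 0"
    using neg by simp
  ultimately obtain d where "d > 0" and decr: "\<forall>t>0. t < d \<longrightarrow> f 0 > f (0 + t)"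
    by (blast dest: DERIV_neg_dec_right)
  then have "f (d/2) < f 0" by simp
  moreover have "inner ((u + (d/2) *\<^sub>R h) - u) (D (u + (d/2) *\<^sub>R h) - D u) \<ge> 0"
    using mono unfolding monotone_op_def by blast
  hence "(d/2) * (f (d/2) - f 0) \<ge> 0"
    by (simp add: f_def inner_diff_right right_diff_distrib)
  ultimately show False using \<open>d > 0\<close> by (simp add: zero_le_mult_iff)
qed

lemma monotone_op_linearization:
  fixes D :: "'a::real_inner \<Rightarrow> 'a"
  assumes "monotone_op (\<lambda>y. {D y})" "(D has_derivative blinfun_apply (D' u)) (at u)"
  shows "monotone_op (\<lambda>y. {linearization D D' u y})"
  using monotone_derivative_nonneg[OF assms]
  by (simp add: monotone_op_def linearization_def blinfun.diff_right[symmetric])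

lemma lipschitz_on_bounded_image:
  assumes "C-lipschitz_on S f" "bounded S"
  shows "bounded (f ` S)"
proof (cases "S = {}")
  case False
  then obtain a where "a \<in> S" by blast
  from \<open>bounded S\<close> obtain B where B: "\<And>x. x \<in> S \<Longrightarrow> dist a x \<le> B"
    using bounded_any_center by blast
  have "dist (f a) (f x) \<le> C * B" if "x \<in> S" for x
    using lipschitz_onD[OF assms(1) \<open>a \<in> S\<close> that] B[OF that] lipschitz_on_nonneg[OF assms(1)]
    by (meson mult_left_mono order_trans)
  thus ?thesis unfolding bounded_def by blast
qed simp

lemma bounded_derivative_bounded_image:
  fixes f :: "'a::real_normed_vector \<Rightarrow> 'b::real_normed_vector"
  assumes "convex S" "bounded S"
    and "\<And>x. x \<in> S \<Longrightarrow> (f has_derivative blinfun_apply (f' x)) (at x within S)"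
    and "bounded (f' ` S)"
  shows "bounded (f ` S)"
proof -
  obtain C where "C > 0" and C: "\<And>x. x \<in> S \<Longrightarrow> norm (f' x) \<le> C"
    using assms(4) unfolding bounded_pos by blast
  have "C-lipschitz_on S f"
    using assms(1,3) C \<open>C > 0\<close>
    by (intro bounded_derivative_imp_lipschitz) (auto simp: norm_blinfun.rep_eq)
  thus ?thesis using assms(2) by (rule lipschitz_on_bounded_image)
qed

lemma (in bounded_bilinear) bounded_image:
  assumes "bounded (f ` S)" "bounded (g ` S)"
  shows "bounded ((\<lambda>x. prod (f x) (g x)) ` S)"
proof -
  obtain B where B: "\<And>x. x \<in> S \<Longrightarrow> norm (f x) \<le> B"
    using assms(1) unfolding bounded_iff by auto
  obtain C where C: "\<And>x. x \<in> S \<Longrightarrow> norm (g x) \<le> C"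
    using assms(2) unfolding bounded_iff by auto
  obtain K where K: "\<And>a b. norm (prod a b) \<le> norm a * norm b * K" "K > 0"
    using pos_bounded by blast
  have "norm (prod (f x) (g x)) \<le> B * C * K" if "x \<in> S" for x
  proof -
    have "norm (f x) * norm (g x) \<le> B * C"
      using B[OF that] C[OF that] by (intro mult_mono) (auto intro: order_trans[OF norm_ge_zero])
    with K show ?thesis by (meson less_imp_le mult_right_mono order_trans)
  qed
  thus ?thesis unfolding bounded_iff by auto
qed

lemma bounded_linearization_image:
  fixes D :: "'a::real_normed_vector \<Rightarrow> 'a"
  assumes "\<And>y. (D has_derivative blinfun_apply (D' y)) (at y)"
    and "L-lipschitz_on UNIV D'" "bounded U"
  shows "bounded ((\<lambda>u. linearization D D' u z) ` U)"
proof -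
  obtain r where U: "U \<subseteq> ball 0 r"
    using bounded_subset_ballD[OF \<open>bounded U\<close>] by blast
  have "L-lipschitz_on (ball 0 r) D'"
    using lipschitz_on_subset[OF assms(2) subset_UNIV] .
  then have D'_bounded: "bounded (D' ` ball 0 r)"
    by (rule lipschitz_on_bounded_image) simp
  have "bounded (D ` ball 0 r)"
    by (rule bounded_derivative_bounded_image[OF convex_ball bounded_ball
          has_derivative_at_withinI[OF assms(1)] D'_bounded])
  with U D'_bounded have "bounded (D ` U)" "bounded (D' ` U)"
    by (auto intro: bounded_subset)
  moreover have "bounded ((\<lambda>u. z - u) ` U)"
    using bounded_translation[of "uminus ` U" z] \<open>bounded U\<close> by (simp add: image_image)
  ultimately show ?thesis
    unfolding linearization_def
    by (intro bounded_plus_comp bounded_bilinear.bounded_image[OF bounded_bilinear_blinfun_apply])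
qed

theorem lemma2p4:
  fixes T :: "'a::{real_inner,complete_space} \<Rightarrow> 'a set"
    and D :: "'a \<Rightarrow> 'a"
    and D' :: "'a \<Rightarrow> ('a \<Rightarrow>\<^sub>L 'a)"
    and s u x :: "nat \<Rightarrow> 'a"
    and \<rho> :: "nat \<Rightarrow> real"
  assumes "maximal_monotone T"
    and "monotone_op (\<lambda>y. {D y})"
    and "\<And>y. (D has_derivative blinfun_apply (D' y)) (at y)"
    and "continuous_on UNIV D'"
    and "\<exists>L. L-lipschitz_on UNIV D'"
    and "bounded (range s)"
    and "bounded (range u)"
    and "\<And>k. \<rho> k > 0"
    and "bounded (range \<rho>)"
    and "\<And>k. x k \<in> resolvent (op_scale (\<rho> k) (op_plus T (linearization D D' (u k)))) (s k)"
  shows "bounded (range x)"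
proof -
  obtain x0 t0 where t0: "t0 \<in> T x0"
    using assms(1) maximal_monotone_domain_nonempty by blast
  obtain L where L: "L-lipschitz_on UNIV D'" using assms(5) by blast
  define F where "F k = linearization D D' (u k)" for k
  define c where "c k = x0 + \<rho> k *\<^sub>R (t0 + F k x0)" for k
  have "dist (x k) x0 \<le> dist (s k) (c k)" for k
  proof (rule resolvent_nonexpansive)
    have "monotone_op (\<lambda>y. {F k y})"
      unfolding F_def using assms(2,3) by (rule monotone_op_linearization)
    with assms(1,8) show "monotone_op (op_scale (\<rho> k) (op_plus T (F k)))"
      unfolding maximal_monotone_def by (simp add: less_imp_le monotone_op_plus monotone_op_scale)
    show "x0 \<in> resolvent (op_scale (\<rho> k) (op_plus T (F k))) (c k)"
      using t0 by (auto simp: resolvent_iff c_def op_scale_def op_plus_def)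
  qed (use assms(10) F_def in simp)
  moreover have "bounded (range c)"
    using bounded_linearization_image[OF assms(3) L assms(7), of x0] assms(9)
    unfolding c_def F_def image_image
    by (intro bounded_translation bounded_bilinear.bounded_image[OF bounded_bilinear_scaleR]
        bounded_plus_comp) auto
  moreover obtain B where "\<And>k. norm (s k - c k) \<le> B"
    using bounded_minus_comp[OF assms(6) \<open>bounded (range c)\<close>] unfolding bounded_iff by auto
  ultimately have "x k \<in> cball x0 B" for k
    by (metis dist_commute dist_norm mem_cball order_trans)
  hence "range x \<subseteq> cball x0 B" by auto
  thus ?thesis by (rule bounded_subset[OF bounded_cball])
qed

end
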